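(* For all integers $n,m \geq 1$ with $\{n,m\} \neq \{1,1\}$ and $\{n,m\}\neq\{1,3\}$, $$\overline{a}(n)\, \overline{a}(m) \geq \overline{a}(n+m).$$ Moreover, among such pairs equality holds only when $\{n,m\}=\{1,2\}$.
   Context: The cubic overpartition function $\overline{a}(n)$ is defined by $\sum_{n\ge 0}\overline{a}(n)q^n=\frac{(-q;q)_\infty(-q^2;q^2)_\infty}{(q;q)_\infty(q^2;q^2)_\infty}$ for $|q|<1$, where $(a;q)_\infty=\prod_{j\ge 0}(1-aq^j)$. *)

theory Defs
  imports "HOL-Computational_Algebra.Formal_Power_Series"
begin

text \<open>Cubic overpartition function: coefficient of q^n in
  prod_{j>=1} (1+q^j)(1+q^{2j}) / ((1-q^j)(1-q^{2j})).
  Factors with j > n are congruent to 1 modulo q^(n+1), so the coefficient of q^n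
  equals that of the finite product over j = 1..n, computed as formal power series.\<close>

definition cubic_factor :: "nat \<Rightarrow> rat fps" where
  "cubic_factor j = (1 + fps_X ^ j) * (1 + fps_X ^ (2 * j))
      * inverse ((1 - fps_X ^ j) * (1 - fps_X ^ (2 * j)))"

definition cubic_overpartition :: "nat \<Rightarrow> rat" where
  "cubic_overpartition n = fps_nth (\<Prod>j\<in>{1..n}. cubic_factor j) n"

end

(*
  Taking the logarithmic derivative q d/dq of the product (each factor (1+q^j)/(1-q^j)
  contributes 2j q^(jt) for odd t) gives the recurrence n a(n) = sum_{k=1..n} sigma(k) a(n-k)
  with 2k <= sigma(k) <= (3k^2 + 14k)/4.

  One proves a(n+m) <= a(n) a(m) by strong induction on n+m, allowing a defect of 2 at the
  two exceptional pairs {1,1} and {1,3}. For n, m < 15 this is read off the values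
  a(0), ..., a(28), certified by the recurrence. Otherwise let n <= m, m >= 15, and split the
  recurrence for (n+m) a(n+m) at k = m. By induction the terms with k <= m sum to at most
  a(n) m a(m) plus at most two defects; since sigma(m+i) <= a(m) sigma(i), the terms with
  k > m sum to at most a(m) n a(n) - 2 a(m) + O(m^2). The recurrence also gives
  a(m) >= m^3/4, which absorbs the O(m^2) error terms, so the inequality is strict for
  m >= 15. Hence equality can only occur in the table range, where it happens only for {1,2}.
*)

theory Submission
  imports Defs
begin

unbundle fps_syntax

definition fps_logderiv :: "'a::field fps \<Rightarrow> 'a fps" where
  "fps_logderiv f = fps_X * fps_deriv f * inverse f"

lemma fps_logderiv_mult:
  fixes f g :: "'a::field fps"
  assumes "f $ 0 \<noteq> 0" "g $ 0 \<noteq> 0"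
  shows "fps_logderiv (f * g) = fps_logderiv f + fps_logderiv g"
proof -
  have "fps_logderiv (f * g)
      = fps_X * fps_deriv g * inverse g * (f * inverse f) + fps_X * fps_deriv f * inverse f * (g * inverse g)"
    by (simp add: fps_logderiv_def fps_inverse_mult algebra_simps)
  then show ?thesis
    using assms by (simp add: fps_logderiv_def inverse_mult_eq_1')
qed

lemma fps_logderiv_inverse:
  fixes f :: "'a::field fps"
  assumes "f $ 0 \<noteq> 0"
  shows "fps_logderiv (inverse f) = - fps_logderiv f"
proof -
  have "fps_logderiv (inverse f) = - (fps_X * fps_deriv f * inverse f) * (inverse f * f)"
    using assms by (simp add: fps_logderiv_def fps_inverse_deriv power2_eq_square algebra_simps)
  then show ?thesis
    using assms by (simp add: fps_logderiv_def inverse_mult_eq_1)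
qed

lemma fps_prod_nth_0:
  "finite S \<Longrightarrow> (\<Prod>j\<in>S. f j) $ 0 = (\<Prod>j\<in>S. (f j :: 'a::comm_ring_1 fps) $ 0)"
  by (induction S rule: finite_induct) auto

lemma fps_logderiv_prod:
  fixes f :: "'b \<Rightarrow> 'a::field fps"
  assumes "finite S" "\<And>j. j \<in> S \<Longrightarrow> f j $ 0 \<noteq> 0"
  shows "fps_logderiv (\<Prod>j\<in>S. f j) = (\<Sum>j\<in>S. fps_logderiv (f j))"
  using assms
proof (induction S rule: finite_induct)
  case empty
  then show ?case by (simp add: fps_logderiv_def)
next
  case (insert x F)
  then have "(\<Prod>j\<in>F. f j) $ 0 \<noteq> 0" by (simp add: fps_prod_nth_0)
  with insert show ?case by (simp add: fps_logderiv_mult)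
qed

lemma fps_X_deriv_binomial:
  fixes c :: "'a::field"
  assumes j: "j \<ge> 1"
  defines "g \<equiv> Abs_fps (\<lambda>k. if 0 < k \<and> j dvd k then - of_nat j * (-c) ^ (k div j) else 0)"
  shows "g * (1 + fps_const c * fps_X ^ j) = fps_X * fps_deriv (1 + fps_const c * fps_X ^ j)"
proof (rule fps_ext)
  fix k
  have "fps_X * fps_X ^ (j - 1) = (fps_X ^ j :: 'a fps)"
    using j by (simp flip: power_Suc)
  then have deriv: "fps_X * fps_deriv (1 + fps_const c * fps_X ^ j) = fps_const (c * of_nat j) * fps_X ^ j"
    by (simp add: fps_deriv_power' fps_of_nat algebra_simps flip: fps_const_mult)
  have "g * (1 + fps_const c * fps_X ^ j) = g + fps_const c * (fps_X ^ j * g)"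
    by (simp add: algebra_simps)
  then have "(g * (1 + fps_const c * fps_X ^ j)) $ k = g $ k + c * (if k < j then 0 else g $ (k - j))"
    by (simp add: fps_X_power_mult_nth)
  also have "\<dots> = (if k = j then c * of_nat j else 0)"
  proof (cases "j < k \<and> j dvd k")
    case True
    then obtain t where t: "k = j * t" by blast
    with True have "j * 1 < j * t" by simp
    then have "1 < t" by simp
    then have "(-c) ^ t = (-c) * (-c) ^ (t - 1)"
      by (simp flip: power_Suc)
    moreover have "k - j = j * (t - 1)"
      using t by (simp add: right_diff_distrib')
    ultimately show ?thesis
      using t j \<open>1 < t\<close> by (simp add: g_def)
  next
    case False
    have "\<not> j dvd k - j" if "j < k" "\<not> j dvd k"
      using that by (simp add: dvd_diff_nat dvd_minus_self)
    with False j show ?thesis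
      by (auto simp: g_def dest: dvd_imp_le)
  qed
  also have "\<dots> = (fps_X * fps_deriv (1 + fps_const c * fps_X ^ j)) $ k"
    by (simp add: deriv fps_X_power_mult_right_nth)
  finally show "(g * (1 + fps_const c * fps_X ^ j)) $ k = (fps_X * fps_deriv (1 + fps_const c * fps_X ^ j)) $ k" .
qed

lemma fps_logderiv_binomial_nth:
  fixes c :: "'a::field"
  assumes "j \<ge> 1"
  shows "fps_logderiv (1 + fps_const c * fps_X ^ j) $ k
       = (if 0 < k \<and> j dvd k then - of_nat j * (-c) ^ (k div j) else 0)"
proof -
  define f where "f = 1 + fps_const c * fps_X ^ j"
  define g where "g = Abs_fps (\<lambda>k. if 0 < k \<and> j dvd k then - of_nat j * (-c) ^ (k div j) else (0::'a))"
  have "fps_logderiv f = g * (f * inverse f)"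
    using fps_X_deriv_binomial[OF assms, of c] by (simp add: fps_logderiv_def f_def g_def mult.assoc)
  also have "\<dots> = g"
    using assms by (simp add: f_def inverse_mult_eq_1')
  finally show ?thesis by (simp add: f_def g_def)
qed

lemma fps_logderiv_one_plus_one_minus_nth:
  fixes i :: nat
  assumes "i \<ge> 1"
  shows "fps_logderiv ((1 + fps_X ^ i) * inverse (1 - fps_X ^ i)) $ k
       = (if i dvd k \<and> odd (k div i) then 2 * of_nat i else (0::'a::field))"
proof -
  have plus: "1 + fps_X ^ i = 1 + fps_const (1::'a) * fps_X ^ i"
    and minus: "1 - fps_X ^ i = 1 + fps_const (-1::'a) * fps_X ^ i"
    by (simp_all flip: fps_const_neg)
  have "fps_logderiv ((1 + fps_X ^ i) * inverse (1 - fps_X ^ i))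
      = fps_logderiv (1 + fps_const (1::'a) * fps_X ^ i)
        - fps_logderiv (1 + fps_const (-1::'a) * fps_X ^ i)"
    unfolding plus minus using assms
    by (subst fps_logderiv_mult) (simp_all add: fps_logderiv_inverse del: fps_const_neg)
  then have "fps_logderiv ((1 + fps_X ^ i) * inverse (1 - fps_X ^ i)) $ k
      = fps_logderiv (1 + fps_const (1::'a) * fps_X ^ i) $ k
        - fps_logderiv (1 + fps_const (-1::'a) * fps_X ^ i) $ k"
    by simp
  also have "\<dots> = (if i dvd k \<and> odd (k div i) then 2 * of_nat i else 0)"
    using assms fps_logderiv_binomial_nth[of i 1 k]
    by (cases "0 < k") (auto simp: fps_logderiv_binomial_nth elim!: oddE evenE)
  finally show ?thesis .
qed

definition cubic_sigma_part :: "nat \<Rightarrow> nat \<Rightarrow> nat" where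
  "cubic_sigma_part j k = (if j dvd k \<and> odd (k div j) then 2 * j else 0)
     + (if (2 * j) dvd k \<and> odd (k div (2 * j)) then 4 * j else 0)"

definition cubic_sigma :: "nat \<Rightarrow> nat" where
  "cubic_sigma k = (\<Sum>j=1..k. cubic_sigma_part j k)"

definition cubic_partial_product :: "nat \<Rightarrow> rat fps" where
  "cubic_partial_product N = (\<Prod>j=1..N. cubic_factor j)"

lemma cubic_factor_nth_0: "j \<ge> 1 \<Longrightarrow> cubic_factor j $ 0 = 1"
  by (simp add: cubic_factor_def)

lemma fps_logderiv_cubic_factor_nth:
  assumes "j \<ge> 1"
  shows "fps_logderiv (cubic_factor j) $ k = of_nat (cubic_sigma_part j k)"
proof -
  define h :: "nat \<Rightarrow> rat fps" where "h i = (1 + fps_X ^ i) * inverse (1 - fps_X ^ i)" for i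
  have "cubic_factor j = h j * h (2 * j)"
    by (simp only: cubic_factor_def h_def fps_inverse_mult mult_ac)
  moreover have "h i $ 0 \<noteq> 0" if "i \<ge> 1" for i
    using that by (simp add: h_def)
  ultimately have "fps_logderiv (cubic_factor j) = fps_logderiv (h j) + fps_logderiv (h (2 * j))"
    using assms by (simp add: fps_logderiv_mult)
  then show ?thesis
    using assms by (simp add: h_def fps_logderiv_one_plus_one_minus_nth cubic_sigma_part_def)
qed

lemma cubic_sigma_part_eq_0: "0 < k \<Longrightarrow> k < j \<Longrightarrow> cubic_sigma_part j k = 0"
  by (auto simp: cubic_sigma_part_def dest: dvd_imp_le)

lemma sum_cubic_sigma_part:
  assumes "k \<le> N"
  shows "(\<Sum>j=1..N. cubic_sigma_part j k) = cubic_sigma k"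
proof (cases "k = 0")
  case True
  then show ?thesis by (simp add: cubic_sigma_def cubic_sigma_part_def)
next
  case False
  have "(\<Sum>j=1..N. cubic_sigma_part j k) = (\<Sum>j=1..k. cubic_sigma_part j k)"
    using False assms by (intro sum.mono_neutral_right) (auto intro: cubic_sigma_part_eq_0)
  then show ?thesis by (simp add: cubic_sigma_def)
qed

lemma fps_logderiv_cubic_partial_product_nth:
  "k \<le> N \<Longrightarrow> fps_logderiv (cubic_partial_product N) $ k = of_nat (cubic_sigma k)"
  unfolding cubic_partial_product_def
  by (subst fps_logderiv_prod)
     (auto simp: cubic_factor_nth_0 fps_sum_nth fps_logderiv_cubic_factor_nth
       simp flip: sum_cubic_sigma_part)

lemma cubic_partial_product_recurrence:
  assumes "n \<le> N"
  shows "of_nat n * cubic_partial_product N $ n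
       = (\<Sum>i=1..n. of_nat (cubic_sigma i) * cubic_partial_product N $ (n - i))"
proof -
  let ?P = "cubic_partial_product N"
  have "?P $ 0 = 1"
    by (simp add: cubic_partial_product_def fps_prod_nth_0 cubic_factor_nth_0)
  then have "fps_X * fps_deriv ?P = fps_logderiv ?P * ?P"
    by (simp add: fps_logderiv_def mult.assoc inverse_mult_eq_1)
  moreover have "(fps_X * fps_deriv ?P) $ n = of_nat n * ?P $ n"
    by (cases n) (simp_all add: algebra_simps)
  ultimately have "of_nat n * ?P $ n = (\<Sum>i=0..n. fps_logderiv ?P $ i * ?P $ (n - i))"
    by (simp add: fps_mult_nth)
  also have "\<dots> = (\<Sum>i=1..n. of_nat (cubic_sigma i) * ?P $ (n - i))"
    using assms
    by (simp add: sum.atLeast_Suc_atMost fps_logderiv_cubic_partial_product_nth cubic_sigma_def)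
  finally show ?thesis .
qed

(* Both sides satisfy the same recurrence, which does not depend on N >= n. *)
lemma cubic_partial_product_nth:
  "n \<le> N \<Longrightarrow> cubic_partial_product N $ n = cubic_overpartition n"
proof (induction n arbitrary: N rule: less_induct)
  case (less n)
  show ?case
  proof (cases "n = 0")
    case True
    then show ?thesis
      by (simp add: cubic_overpartition_def cubic_partial_product_def fps_prod_nth_0 cubic_factor_nth_0)
  next
    case False
    have "of_nat n * cubic_partial_product N $ n = of_nat n * cubic_partial_product n $ n"
      using less False by (simp add: cubic_partial_product_recurrence)
    with False show ?thesis
      by (simp add: cubic_overpartition_def cubic_partial_product_def)
  qed
qed

lemma cubic_overpartition_0: "cubic_overpartition 0 = 1"
  by (simp add: cubic_overpartition_def)

lemma cubic_overpartition_recurrence: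
  "of_nat n * cubic_overpartition n
     = (\<Sum>i=1..n. of_nat (cubic_sigma i) * cubic_overpartition (n - i))"
  using cubic_partial_product_recurrence[of n n] by (simp add: cubic_partial_product_nth)

lemma cubic_sigma_part_le: "cubic_sigma_part j k \<le> 6 * j"
  by (simp add: cubic_sigma_part_def)

lemma cubic_sigma_part_self: "k \<ge> 1 \<Longrightarrow> cubic_sigma_part k k = 2 * k"
  by (simp add: cubic_sigma_part_def)

lemma cubic_sigma_part_upper_half:
  assumes "k div 2 < j" "j < k"
  shows "cubic_sigma_part j k = 0"
proof -
  have "\<not> j dvd k"
  proof
    assume "j dvd k"
    then obtain t where t: "k = j * t" ..
    with assms have "t \<noteq> 0" "t \<noteq> 1" by auto
    then have "j * 2 \<le> j * t" by simp
    with t assms show False by linarith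
  qed
  then have "\<not> (2 * j) dvd k"
    by (meson dvd_mult_right)
  with \<open>\<not> j dvd k\<close> show ?thesis
    by (simp add: cubic_sigma_part_def)
qed

lemma cubic_sigma_ge:
  assumes "k \<ge> 1"
  shows "2 * k \<le> cubic_sigma k"
proof -
  have "cubic_sigma_part k k \<le> cubic_sigma k"
    unfolding cubic_sigma_def using assms by (intro member_le_sum) auto
  with assms show ?thesis
    by (simp add: cubic_sigma_part_self)
qed

lemma cubic_sigma_le: "4 * cubic_sigma k \<le> 3 * k ^ 2 + 14 * k"
proof (cases "k = 0")
  case True
  then show ?thesis by (simp add: cubic_sigma_def)
next
  case False
  define h where "h = k div 2"
  have "{1..k} = {1..h} \<union> {h+1..k}"
    using False by (auto simp: h_def)
  then have "cubic_sigma k = (\<Sum>j=1..h. cubic_sigma_part j k) + (\<Sum>j=h+1..k. cubic_sigma_part j k)"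
    unfolding cubic_sigma_def by (simp add: sum.union_disjoint)
  also have "(\<Sum>j=h+1..k. cubic_sigma_part j k) = (\<Sum>j=h+1..k. if j = k then 2 * k else 0)"
    using False by (intro sum.cong) (auto simp: h_def cubic_sigma_part_self cubic_sigma_part_upper_half)
  also have "\<dots> = 2 * k"
    using False by (simp add: h_def)
  also have "(\<Sum>j=1..h. cubic_sigma_part j k) \<le> (\<Sum>j=1..h. 6 * j)"
    by (intro sum_mono cubic_sigma_part_le)
  also have "(\<Sum>j=1..h. 6 * j) = 3 * (h * h) + 3 * h"
    by (induction h) (simp_all add: algebra_simps)
  finally have "cubic_sigma k \<le> 3 * (h * h) + 3 * h + 2 * k" by simp
  moreover have "2 * h \<le> k"
    unfolding h_def by presburger
  moreover from this have "4 * (h * h) \<le> k * k"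
    using mult_le_mono[of "2 * h" k "2 * h" k] by simp
  ultimately show ?thesis
    unfolding power2_eq_square by linarith
qed

lemma cubic_sigma_le_square:
  assumes "k \<le> m"
  shows "4 * (of_nat (cubic_sigma k) :: 'a::linordered_semidom) \<le> 3 * of_nat m ^ 2 + 14 * of_nat m"
proof -
  have "3 * k ^ 2 + 14 * k \<le> 3 * m ^ 2 + 14 * m"
    using assms by (intro add_mono mult_le_mono2 power_mono) auto
  then have "4 * cubic_sigma k \<le> 3 * m ^ 2 + 14 * m"
    using cubic_sigma_le[of k] by linarith
  then have "of_nat (4 * cubic_sigma k) \<le> (of_nat (3 * m ^ 2 + 14 * m) :: 'a)"
    by (rule of_nat_mono)
  then show ?thesis
    by simp
qed

lemma cubic_overpartition_nonneg: "0 \<le> cubic_overpartition n"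
proof (induction n rule: less_induct)
  case (less n)
  show ?case
  proof (cases "n = 0")
    case True
    then show ?thesis by (simp add: cubic_overpartition_0)
  next
    case False
    have "0 \<le> (\<Sum>i=1..n. of_nat (cubic_sigma i) * cubic_overpartition (n - i))"
      using less False by (intro sum_nonneg) simp
    then have "0 \<le> of_nat n * cubic_overpartition n"
      by (simp only: cubic_overpartition_recurrence)
    with False show ?thesis
      by (simp add: zero_le_mult_iff)
  qed
qed

(* Tables are certified in integer arithmetic, which code_simp evaluates far faster than
   rational arithmetic. *)
lemma map_eq_if_recurrence:
  fixes f :: "nat \<Rightarrow> 'a::field_char_0" and w :: "nat \<Rightarrow> nat" and v :: "int list"
  assumes rec: "\<And>n. of_nat n * f n = (\<Sum>i=1..n. of_nat (w i) * f (n - i))"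
    and start: "f 0 = of_int (v ! 0)"
    and weights: "map w [0..<length v] = ws"
    and check: "\<forall>k\<in>{1..<length v}. int k * v ! k = (\<Sum>i=1..k. int (ws ! i) * v ! (k - i))"
  shows "map f [0..<length v] = map of_int v"
proof -
  have "f k = of_int (v ! k)" if "k < length v" for k
    using that
  proof (induction k rule: less_induct)
    case (less k)
    show ?case
    proof (cases "k = 0")
      case True
      with start show ?thesis by simp
    next
      case False
      have "(\<Sum>i=1..k. int (ws ! i) * v ! (k - i)) = int k * v ! k"
        using check less.prems False by simp
      then have "of_nat k * of_int (v ! k) = (of_int (\<Sum>i=1..k. int (ws ! i) * v ! (k - i)) :: 'a)"
        by simp
      also have "\<dots> = (\<Sum>i=1..k. of_nat (ws ! i) * of_int (v ! (k - i)))"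
        by simp
      also have "\<dots> = (\<Sum>i=1..k. of_nat (w i) * f (k - i))"
        using less.IH less.prems by (intro sum.cong) (auto simp flip: weights)
      also have "\<dots> = of_nat k * f k"
        by (rule rec[symmetric])
      finally show ?thesis
        using False by simp
    qed
  qed
  then show ?thesis
    by (intro nth_equalityI) auto
qed

definition cubic_overpartition_table :: "int list" where
  "cubic_overpartition_table =
     [1, 2, 6, 12, 26, 48, 92, 160, 282, 470, 784, 1260, 2020, 3152, 4896, 7456, 11290,
      16836, 24962, 36556, 53232, 76736, 110012, 156384, 221156, 310482, 433776, 602200, 832224]"

lemma cubic_overpartition_eq_table:
  assumes "k < length cubic_overpartition_table"
  shows "cubic_overpartition k = of_int (cubic_overpartition_table ! k)"
proof -
  let ?s = "[0, 2, 8, 8, 16, 12, 32, 16, 32, 26, 48, 24, 64, 28, 64, 48, 64, 36, 104, 40, 96,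
             64, 96, 48, 128, 62, 112, 80, 128] :: nat list"
  have weights: "map cubic_sigma [0..<length cubic_overpartition_table] = ?s"
    unfolding cubic_overpartition_table_def by code_simp
  have check: "\<forall>k\<in>{1..<length cubic_overpartition_table}.
      int k * cubic_overpartition_table ! k = (\<Sum>i=1..k. int (?s ! i) * cubic_overpartition_table ! (k - i))"
    unfolding cubic_overpartition_table_def by code_simp
  have table_eq: "map cubic_overpartition [0..<length cubic_overpartition_table]
      = map of_int cubic_overpartition_table"
    by (rule map_eq_if_recurrence[OF cubic_overpartition_recurrence _ weights check])
      (simp add: cubic_overpartition_0 cubic_overpartition_table_def)
  show ?thesis
    using arg_cong[where f = "\<lambda>xs. xs ! k", OF table_eq] assms by simp
qed

definition exceptional_pair :: "nat \<Rightarrow> nat \<Rightarrow> bool" where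
  "exceptional_pair n m \<longleftrightarrow> {n, m} = {1, 1} \<or> {n, m} = {1, 3}"

lemma cubic_overpartition_small_pairs:
  fixes n m :: nat
  assumes "1 \<le> n" "n < 15" "1 \<le> m" "m < 15"
  shows "cubic_overpartition (n + m)
           \<le> cubic_overpartition n * cubic_overpartition m + (if exceptional_pair n m then 2 else 0)"
    and "\<not> exceptional_pair n m \<Longrightarrow> {n, m} \<noteq> {1, 2} \<Longrightarrow>
           cubic_overpartition (n + m) < cubic_overpartition n * cubic_overpartition m"
proof -
  let ?t = "\<lambda>k. cubic_overpartition_table ! k"
  have "\<forall>n\<in>{1..<15}. \<forall>m\<in>{1..<15}.
          ?t (n + m) \<le> ?t n * ?t m + (if exceptional_pair n m then 2 else 0)
        \<and> (\<not> exceptional_pair n m \<and> {n, m} \<noteq> {1, 2} \<longrightarrow> ?t (n + m) < ?t n * ?t m)"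
    unfolding cubic_overpartition_table_def exceptional_pair_def by code_simp
  then have le: "?t (n + m) \<le> ?t n * ?t m + (if exceptional_pair n m then 2 else 0)"
    and lt: "\<not> exceptional_pair n m \<Longrightarrow> {n, m} \<noteq> {1, 2} \<Longrightarrow> ?t (n + m) < ?t n * ?t m"
    using assms by auto
  have table: "cubic_overpartition k = of_int (?t k)" if "k < 29" for k
    using that by (simp add: cubic_overpartition_eq_table cubic_overpartition_table_def)
  show "cubic_overpartition (n + m)
          \<le> cubic_overpartition n * cubic_overpartition m + (if exceptional_pair n m then 2 else 0)"
  proof -
    have "rat_of_int (?t (n + m)) \<le> of_int (?t n * ?t m + (if exceptional_pair n m then 2 else 0))"
      using le by (simp only: of_int_le_iff)
    then show ?thesis
      using assms by (cases "exceptional_pair n m") (simp_all add: table)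
  qed
  show "cubic_overpartition (n + m) < cubic_overpartition n * cubic_overpartition m"
    if "\<not> exceptional_pair n m" "{n, m} \<noteq> {1, 2}"
  proof -
    have "rat_of_int (?t (n + m)) < of_int (?t n * ?t m)"
      using lt[OF that] by (simp only: of_int_less_iff)
    then show ?thesis
      using assms by (simp add: table)
  qed
qed

lemma cubic_overpartition_small_cube_le:
  assumes "m < 11"
  shows "(of_nat m) ^ 3 \<le> 4 * cubic_overpartition m"
proof -
  have "\<forall>m\<in>{0..<11}. int m ^ 3 \<le> 4 * cubic_overpartition_table ! m"
    unfolding cubic_overpartition_table_def by code_simp
  then have "int m ^ 3 \<le> 4 * cubic_overpartition_table ! m"
    using assms by simp
  then have "rat_of_int (int m ^ 3) \<le> of_int (4 * cubic_overpartition_table ! m)"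
    by (simp only: of_int_le_iff)
  then show ?thesis
    using assms by (simp add: cubic_overpartition_eq_table cubic_overpartition_table_def)
qed

lemma sum_cubes: "4 * (\<Sum>j\<le>m. j ^ 3) = (m::nat)\<^sup>2 * (m + 1)\<^sup>2"
  by (induction m) (simp_all add: algebra_simps power2_eq_square power3_eq_cube)

lemma sum_weighted_cubes: "60 * (\<Sum>j<m. (m - j) * j ^ 3) + 5 * m ^ 3 = 3 * m ^ 5 + 2 * (m::nat)"
proof (induction m)
  case 0
  then show ?case by simp
next
  case (Suc m)
  define S where "S = (\<Sum>j<m. (m - j) * j ^ 3)"
  define C where "C = (\<Sum>j\<le>m. j ^ 3)"
  have "(\<Sum>j<Suc m. (Suc m - j) * j ^ 3) = (\<Sum>j\<le>m. (m - j) * j ^ 3 + j ^ 3)"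
    unfolding lessThan_Suc_atMost by (intro sum.cong) (auto simp: Suc_diff_le)
  also have "\<dots> = S + C"
    by (simp add: S_def C_def sum.distrib lessThan_Suc_atMost[symmetric])
  moreover have "60 * (S + C) + 5 * Suc m ^ 3 = 3 * Suc m ^ 5 + 2 * Suc m"
    using Suc.IH sum_cubes[of m] unfolding S_def[symmetric] C_def[symmetric]
    by (simp add: eval_nat_numeral algebra_simps)
  ultimately show ?case
    by simp
qed

lemma sum_convolution_cubes_ge:
  fixes m :: nat
  assumes "m \<ge> 11"
  shows "m ^ 4 \<le> 2 * (\<Sum>i=1..m. i * (m - i) ^ 3)"
proof -
  have "(\<Sum>i=1..m. i * (m - i) ^ 3) = (\<Sum>j<m. (m - j) * j ^ 3)"
    by (rule sum.reindex_bij_witness[where i = "\<lambda>j. m - j" and j = "\<lambda>i. m - i"]) auto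
  moreover have "30 * m ^ 4 + 5 * m ^ 3 \<le> 3 * m ^ 5"
  proof -
    have "30 * m ^ 4 + 5 * m ^ 3 \<le> 30 * m ^ 4 + 3 * m * m ^ 3"
      using assms by simp
    also have "\<dots> = 33 * m ^ 4"
      by (simp add: eval_nat_numeral algebra_simps)
    also have "\<dots> \<le> 3 * m * m ^ 4"
      using assms by simp
    also have "\<dots> = 3 * m ^ 5"
      by (simp add: eval_nat_numeral algebra_simps)
    finally show ?thesis .
  qed
  ultimately show ?thesis
    using sum_weighted_cubes[of m] by linarith
qed

lemma cubic_overpartition_cube_le: "(of_nat m) ^ 3 \<le> 4 * cubic_overpartition m"
proof (induction m rule: less_induct)
  case (less m)
  show ?case
  proof (cases "m < 11")
    case True
    then show ?thesis by (rule cubic_overpartition_small_cube_le)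
  next
    case False
    have "of_nat (m ^ 4) \<le> (of_nat (2 * (\<Sum>i=1..m. i * (m - i) ^ 3)) :: rat)"
      using sum_convolution_cubes_ge[of m] False by (simp only: of_nat_le_iff)
    also have "\<dots> = 2 * (\<Sum>i=1..m. of_nat i * of_nat (m - i) ^ 3)"
      by simp
    also have "\<dots> \<le> 2 * (\<Sum>i=1..m. (of_nat (cubic_sigma i) / 2) * (4 * cubic_overpartition (m - i)))"
    proof (intro mult_left_mono sum_mono mult_mono)
      fix i assume "i \<in> {1..m}"
      then show "of_nat i \<le> (of_nat (cubic_sigma i) / 2 :: rat)"
        and "of_nat (m - i) ^ 3 \<le> 4 * cubic_overpartition (m - i)"
        using cubic_sigma_ge[of i] less[of "m - i"] by simp_all
    qed (simp_all add: cubic_overpartition_nonneg)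
    also have "\<dots> = 4 * (of_nat m * cubic_overpartition m)"
      by (simp add: cubic_overpartition_recurrence sum_distrib_left)
    finally have "of_nat m * of_nat m ^ 3 \<le> of_nat m * (4 * cubic_overpartition m)"
      by (simp add: eval_nat_numeral)
    with False show ?thesis
      by (simp add: mult_le_cancel_left)
  qed
qed

lemma cubic_overpartition_recurrence_split:
  "of_nat (n + m) * cubic_overpartition (n + m)
     = (\<Sum>k=1..m. of_nat (cubic_sigma k) * cubic_overpartition (n + (m - k)))
     + (\<Sum>i=1..n. of_nat (cubic_sigma (m + i)) * cubic_overpartition (n - i))"
proof -
  have "of_nat (n + m) * cubic_overpartition (n + m)
      = (\<Sum>k=1..n + m. of_nat (cubic_sigma k) * cubic_overpartition (n + m - k))"
    by (rule cubic_overpartition_recurrence)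
  also have "{1..n + m} = {1..m} \<union> {m + 1..m + n}"
    by auto
  also have "(\<Sum>k\<in>{1..m} \<union> {m + 1..m + n}. of_nat (cubic_sigma k) * cubic_overpartition (n + m - k))
      = (\<Sum>k=1..m. of_nat (cubic_sigma k) * cubic_overpartition (n + m - k))
      + (\<Sum>k=m + 1..m + n. of_nat (cubic_sigma k) * cubic_overpartition (n + m - k))"
    by (rule sum.union_disjoint) auto
  also have "(\<Sum>k=m + 1..m + n. of_nat (cubic_sigma k) * cubic_overpartition (n + m - k))
      = (\<Sum>i=1..n. of_nat (cubic_sigma (m + i)) * cubic_overpartition (n - i))"
    by (rule sum.reindex_bij_witness[where i = "\<lambda>i. m + i" and j = "\<lambda>k. k - m"]) auto
  also have "(\<Sum>k=1..m. of_nat (cubic_sigma k) * cubic_overpartition (n + m - k))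
      = (\<Sum>k=1..m. of_nat (cubic_sigma k) * cubic_overpartition (n + (m - k)))"
    by (intro sum.cong) auto
  finally show ?thesis .
qed

lemma exceptional_pair_right: "exceptional_pair n m \<Longrightarrow> m = 1 \<or> m = 3"
  by (auto simp: exceptional_pair_def doubleton_eq_iff)

lemma cubic_overpartition_head_le:
  assumes IH: "\<And>y. 1 \<le> y \<Longrightarrow> y < m \<Longrightarrow>
      cubic_overpartition (n + y)
        \<le> cubic_overpartition n * cubic_overpartition y + (if exceptional_pair n y then 2 else 0)"
  shows "(\<Sum>k=1..m. of_nat (cubic_sigma k) * cubic_overpartition (n + (m - k)))
      \<le> cubic_overpartition n * (of_nat m * cubic_overpartition m) + (3 * of_nat m ^ 2 + 14 * of_nat m)"
proof -
  let ?a = cubic_overpartition and ?s = "\<lambda>k. of_nat (cubic_sigma k) :: rat"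
  define e where "e k = (if k < m \<and> exceptional_pair n (m - k) then 2 else 0 :: rat)" for k
  have "?s k * ?a (n + (m - k)) \<le> ?s k * ?a (m - k) * ?a n + ?s k * e k" if "k \<in> {1..m}" for k
  proof -
    have "?a (n + (m - k)) \<le> ?a n * ?a (m - k) + e k"
      using that IH[of "m - k"] by (cases "k = m") (auto simp: e_def cubic_overpartition_0)
    then have "?s k * ?a (n + (m - k)) \<le> ?s k * (?a n * ?a (m - k) + e k)"
      by (rule mult_left_mono) simp
    then show ?thesis
      by (simp add: algebra_simps)
  qed
  then have "(\<Sum>k=1..m. ?s k * ?a (n + (m - k)))
      \<le> (\<Sum>k=1..m. ?s k * ?a (m - k) * ?a n + ?s k * e k)"
    by (rule sum_mono)
  also have "\<dots> = (\<Sum>k=1..m. ?s k * ?a (m - k)) * ?a n + (\<Sum>k=1..m. ?s k * e k)"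
    by (simp add: sum.distrib sum_distrib_right)
  also have "\<dots> = ?a n * (of_nat m * ?a m) + (\<Sum>k=1..m. ?s k * e k)"
    by (subst cubic_overpartition_recurrence) (simp add: mult.commute)
  also have "(\<Sum>k=1..m. ?s k * e k)
      \<le> (\<Sum>k=1..m. (if k = m - 1 then 2 * ?s (m - 1) else 0) + (if k = m - 3 then 2 * ?s (m - 3) else 0))"
  proof (intro sum_mono)
    fix k assume "k \<in> {1..m}"
    then show "?s k * e k
        \<le> (if k = m - 1 then 2 * ?s (m - 1) else 0) + (if k = m - 3 then 2 * ?s (m - 3) else 0)"
      using exceptional_pair_right[of n "m - k"] by (auto simp: e_def)
  qed
  also have "\<dots> \<le> 2 * ?s (m - 1) + 2 * ?s (m - 3)"
    by (simp add: sum.distrib)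
  also have "\<dots> \<le> 3 * of_nat m ^ 2 + 14 * of_nat m"
    using cubic_sigma_le_square[where 'a = rat, of "m - 1" m] cubic_sigma_le_square[where 'a = rat, of "m - 3" m]
    by simp
  finally show ?thesis
    by simp
qed

lemma cubic_overpartition_tail_le:
  assumes "1 \<le> n" "n \<le> m" and large: "3 * of_nat m ^ 2 + 7 * of_nat m \<le> 2 * cubic_overpartition m"
  shows "(\<Sum>i=1..n. of_nat (cubic_sigma (m + i)) * cubic_overpartition (n - i))
      \<le> cubic_overpartition m * (of_nat n * cubic_overpartition n) - 2 * cubic_overpartition m
        + (3 * of_nat m ^ 2 + 7 * of_nat m)"
proof -
  let ?a = cubic_overpartition and ?s = "\<lambda>k. of_nat (cubic_sigma k) :: rat"
  define t where "t i = (?a m * ?s i - ?s (m + i)) * ?a (n - i)" for i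
  have sigma_shift_le: "?s (m + i) \<le> 3 * of_nat m ^ 2 + 7 * of_nat m" if "i \<le> n" for i
    using cubic_sigma_le_square[where 'a = rat, of "m + i" "2 * m"] that assms
    by (simp add: power2_eq_square algebra_simps)
  have sigma_ge: "2 \<le> ?s i" if "1 \<le> i" for i
    using cubic_sigma_ge[OF that] that by simp
  have twice: "2 * ?a m \<le> ?a m * ?s i" if "1 \<le> i" for i
    using mult_left_mono[OF sigma_ge[OF that] cubic_overpartition_nonneg[of m]]
    by (simp add: mult.commute)
  have t_nonneg: "0 \<le> t i" if "i \<in> {1..n}" for i
    using that twice[of i] sigma_shift_le[of i] large cubic_overpartition_nonneg[of "n - i"]
    by (simp add: t_def)
  have t_n: "2 * ?a m - (3 * of_nat m ^ 2 + 7 * of_nat m) \<le> t n"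
    using assms twice[of n] sigma_shift_le[of n] by (simp add: t_def cubic_overpartition_0)
  have "?a m * (of_nat n * ?a n) - (\<Sum>i=1..n. ?s (m + i) * ?a (n - i))
      = (\<Sum>i=1..n. ?a m * (?s i * ?a (n - i))) - (\<Sum>i=1..n. ?s (m + i) * ?a (n - i))"
    by (subst cubic_overpartition_recurrence) (simp add: sum_distrib_left)
  also have "\<dots> = (\<Sum>i=1..n. t i)"
    by (simp add: t_def algebra_simps flip: sum_subtractf)
  also have "\<dots> \<ge> t n"
    using assms t_nonneg by (intro member_le_sum) auto
  finally show ?thesis
    using t_n by simp
qed

lemma cubic_overpartition_large_ge:
  assumes "15 \<le> m"
  shows "6 * of_nat m ^ 2 + 21 * of_nat m < 2 * cubic_overpartition m"
proof -
  define M :: rat where "M = of_nat m"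
  have "15 \<le> M"
    using assms by (simp add: M_def)
  moreover from this have "15 * M \<le> M * M"
    by (intro mult_right_mono) auto
  ultimately have "12 * M + 42 < M * M"
    by linarith
  with \<open>15 \<le> M\<close> have "M * (12 * M + 42) < M * (M * M)"
    by (intro mult_strict_left_mono) auto
  moreover have "M ^ 3 \<le> 4 * cubic_overpartition m"
    using cubic_overpartition_cube_le[of m] by (simp add: M_def)
  ultimately show ?thesis
    by (simp add: M_def power2_eq_square power3_eq_cube algebra_simps)
qed

lemma cubic_overpartition_submult_large_ordered:
  assumes "1 \<le> n" "n \<le> m" "15 \<le> m"
    and IH: "\<And>y. 1 \<le> y \<Longrightarrow> y < m \<Longrightarrow>
      cubic_overpartition (n + y)
        \<le> cubic_overpartition n * cubic_overpartition y + (if exceptional_pair n y then 2 else 0)"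
  shows "cubic_overpartition (n + m) < cubic_overpartition n * cubic_overpartition m"
proof -
  let ?a = cubic_overpartition
  have large: "6 * of_nat m ^ 2 + 21 * of_nat m < 2 * ?a m"
    using \<open>15 \<le> m\<close> by (rule cubic_overpartition_large_ge)
  moreover have "0 \<le> (of_nat m :: rat) ^ 2" "0 \<le> (of_nat m :: rat)"
    by simp_all
  ultimately have "3 * of_nat m ^ 2 + 7 * of_nat m \<le> 2 * ?a m"
    by linarith
  have "of_nat (n + m) * ?a (n + m)
      \<le> ?a n * (of_nat m * ?a m) + (3 * of_nat m ^ 2 + 14 * of_nat m)
        + (?a m * (of_nat n * ?a n) - 2 * ?a m + (3 * of_nat m ^ 2 + 7 * of_nat m))"
    unfolding cubic_overpartition_recurrence_split
    using cubic_overpartition_head_le[OF IH] cubic_overpartition_tail_le[of n m] assms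
      \<open>3 * of_nat m ^ 2 + 7 * of_nat m \<le> 2 * ?a m\<close>
    by (intro add_mono) simp_all
  also have "\<dots> < of_nat (n + m) * (?a n * ?a m)"
    using large by (simp add: algebra_simps)
  finally show ?thesis
    by (simp add: mult_less_cancel_left)
qed

lemma cubic_overpartition_submult_large:
  assumes "1 \<le> n" "1 \<le> m" "15 \<le> max n m"
    and IH: "\<And>x y. 1 \<le> x \<Longrightarrow> 1 \<le> y \<Longrightarrow> x + y < n + m \<Longrightarrow>
      cubic_overpartition (x + y)
        \<le> cubic_overpartition x * cubic_overpartition y + (if exceptional_pair x y then 2 else 0)"
  shows "cubic_overpartition (n + m) < cubic_overpartition n * cubic_overpartition m"
proof -
  have ordered: "cubic_overpartition (x + y) < cubic_overpartition x * cubic_overpartition y"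
    if "1 \<le> x" "x \<le> y" "15 \<le> y" "x + y = n + m" for x y
    using that(1-3)
  proof (rule cubic_overpartition_submult_large_ordered)
    fix z assume "1 \<le> z" "z < y"
    with that show "cubic_overpartition (x + z)
        \<le> cubic_overpartition x * cubic_overpartition z + (if exceptional_pair x z then 2 else 0)"
      by (intro IH) auto
  qed
  consider "n \<le> m" "15 \<le> m" | "m \<le> n" "15 \<le> n"
    using assms(3) by linarith
  then show ?thesis
  proof cases
    case 1
    with assms show ?thesis by (intro ordered) auto
  next
    case 2
    with assms ordered[of m n] show ?thesis by (simp add: add.commute mult.commute)
  qed
qed

lemma cubic_overpartition_submult_defect:
  assumes "1 \<le> n" "1 \<le> m"
  shows "cubic_overpartition (n + m)
           \<le> cubic_overpartition n * cubic_overpartition m + (if exceptional_pair n m then 2 else 0)"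
  using assms
proof (induction "n + m" arbitrary: n m rule: less_induct)
  case less
  show ?case
  proof (cases "max n m < 15")
    case True
    with less.prems show ?thesis
      by (intro cubic_overpartition_small_pairs(1)) auto
  next
    case False
    with less have "cubic_overpartition (n + m) < cubic_overpartition n * cubic_overpartition m"
      by (intro cubic_overpartition_submult_large) auto
    then show ?thesis
      by simp
  qed
qed

lemma cubic_overpartition_submult_strict:
  assumes "1 \<le> n" "1 \<le> m" "\<not> exceptional_pair n m" "{n, m} \<noteq> {1, 2}"
  shows "cubic_overpartition (n + m) < cubic_overpartition n * cubic_overpartition m"
proof (cases "max n m < 15")
  case True
  with assms show ?thesis
    by (intro cubic_overpartition_small_pairs(2)) auto
next
  case False
  with assms show ?thesis
    by (intro cubic_overpartition_submult_large cubic_overpartition_submult_defect) auto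
qed

theorem theorem2p6:
  fixes n m :: nat
  assumes "n \<ge> 1" and "m \<ge> 1"
    and "{n, m} \<noteq> {1, 1}" and "{n, m} \<noteq> {1, 3}"
  shows "cubic_overpartition n * cubic_overpartition m \<ge> cubic_overpartition (n + m)
    \<and> (cubic_overpartition n * cubic_overpartition m = cubic_overpartition (n + m)
         \<longrightarrow> {n, m} = {1, 2})"
proof -
  have "\<not> exceptional_pair n m"
    using assms(3,4) by (simp add: exceptional_pair_def)
  with assms(1,2) show ?thesis
    using cubic_overpartition_submult_defect[of n m] cubic_overpartition_submult_strict[of n m]
    by fastforce
qed

end
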